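(* Let $G$ be an $N$-player normal-form game in which each player has $T$ actions, and let $f$ be a deterministic, permutation-equivariant embedding function with $f(G)=(\mathbf{A}_1,\dots,\mathbf{A}_N)$, $\mathbf{A}_p=({\bm{a}}^1_p,\dots,{\bm{a}}^T_p)$. If players $p$ and $q$ are symmetric in $G$, then $\mathbf{A}_p$ and $\mathbf{A}_q$ are identical up to permutation, i.e. there is a bijection $\tau$ between the actions of $p$ and those of $q$ such that the embedding of each action $a^i_p$ equals the embedding of the action $\tau(a^i_p)$ of player $q$.
   Context: A normal-form game $G$ with $N$ players, each player $p$ having actions $\mathcal{A}_p=\{a^1_p,\dots,a^T_p\}$, is given by payoff functions $G_p:\mathcal{A}=\mathcal{A}_1\times\dots\times\mathcal{A}_N\to\mathbb{R}$. A strong isomorphism $\phi=((\tau_p)_{p\in[N]},\omega)$ consists of a permutation $\omega$ of the players and, for each player $p$, a bijection $\tau_p$ from the actions of $p$ to the actions of $\omega(p)$; it maps $G$ to the game $\phi(G)$ with $\phi(G)_{\omega(p)}(b)=G_p(a)$ for all $p$ and joint actions $a$, where $b_{\omega(r)}=\tau_r(a_r)$ for every player $r$. A strong automorphism of $G$ is a strong isomorphism with $\phi(G)=G$. Players $p$ and $q$ are symmetric in $G$ if there exists a strong automorphism of $G$ with $\omega(p)=q$. An embedding function $f$ assigns to each game a tuple $(\mathbf{A}_1,\dots,\mathbf{A}_N)$ of action embeddings ${\bm{a}}^t_p\in\mathbb{R}^D$, one per action; $\phi$ acts on such a tuple by placing the embedding of action $a^i_p$ at the position of action $\tau_p(a^i_p)$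 of player $\omega(p)$. $f$ is (permutation-)equivariant if $f(\phi(G))=\phi(f(G))$ for every game $G$ and strong isomorphism $\phi$; deterministic means $f$ is a single-valued function of the game. *)

theory Defs
  imports "HOL-Analysis.Analysis"
begin

text \<open>Players are the elements of a finite type 'p (N = CARD('p)); every player has the
  same finite action type 't (T = CARD('t)). A joint action is a function 'p => 't.\<close>

type_synonym ('p, 't) game = "'p \<Rightarrow> ('p \<Rightarrow> 't) \<Rightarrow> real"

text \<open>Action embeddings: for each player p and action t a vector in R^D (D = CARD('d)).\<close>
type_synonym ('p, 't, 'd) embedding = "'p \<Rightarrow> 't \<Rightarrow> real ^ 'd"

text \<open>A strong isomorphism: omega permutes players, tau p maps actions of p bijectively
  to actions of omega p.\<close>
definition strong_iso :: "('p \<Rightarrow> 'p) \<Rightarrow> ('p \<Rightarrow> 't \<Rightarrow> 't) \<Rightarrow> bool" where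
  "strong_iso \<omega> \<tau> \<longleftrightarrow> bij \<omega> \<and> (\<forall>p. bij (\<tau> p))"

text \<open>phi(G)_{omega p}(b) = G_p(a) where b (omega r) = tau r (a r).\<close>
definition iso_game :: "('p \<Rightarrow> 'p) \<Rightarrow> ('p \<Rightarrow> 't \<Rightarrow> 't) \<Rightarrow> ('p, 't) game \<Rightarrow> ('p, 't) game" where
  "iso_game \<omega> \<tau> G = (\<lambda>q b. G (inv \<omega> q) (\<lambda>r. inv (\<tau> r) (b (\<omega> r))))"

text \<open>The embedding of action i of player p is placed at action tau p i of player omega p.\<close>
definition iso_emb :: "('p \<Rightarrow> 'p) \<Rightarrow> ('p \<Rightarrow> 't \<Rightarrow> 't) \<Rightarrow> ('p, 't, 'd) embedding \<Rightarrow> ('p, 't, 'd) embedding" where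
  "iso_emb \<omega> \<tau> E = (\<lambda>q j. E (inv \<omega> q) (inv (\<tau> (inv \<omega> q)) j))"

definition strong_automorphism :: "('p, 't) game \<Rightarrow> ('p \<Rightarrow> 'p) \<Rightarrow> ('p \<Rightarrow> 't \<Rightarrow> 't) \<Rightarrow> bool" where
  "strong_automorphism G \<omega> \<tau> \<longleftrightarrow> strong_iso \<omega> \<tau> \<and> iso_game \<omega> \<tau> G = G"

definition symmetric_players :: "('p, 't) game \<Rightarrow> 'p \<Rightarrow> 'p \<Rightarrow> bool" where
  "symmetric_players G p q \<longleftrightarrow> (\<exists>\<omega> \<tau>. strong_automorphism G \<omega> \<tau> \<and> \<omega> p = q)"

text \<open>Determinism: f is a HOL function. Equivariance: f(phi G) = phi(f G) for all G, phi.\<close>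
definition equivariant :: "(('p::finite, 't::finite) game \<Rightarrow> ('p, 't, 'd::finite) embedding) \<Rightarrow> bool" where
  "equivariant f \<longleftrightarrow> (\<forall>\<omega> \<tau> G. strong_iso \<omega> \<tau> \<longrightarrow> f (iso_game \<omega> \<tau> G) = iso_emb \<omega> \<tau> (f G))"

end

theory Submission
  imports Defs
begin

lemma iso_emb_apply:
  assumes "strong_iso \<omega> \<tau>"
  shows "iso_emb \<omega> \<tau> E (\<omega> p) (\<tau> p i) = E p i"
  using assms by (simp add: strong_iso_def iso_emb_def bij_is_inj)

lemma equivariant_embedding_automorphism_invariant:
  assumes "equivariant f" and "strong_automorphism G \<omega> \<tau>"
  shows "f G (\<omega> p) (\<tau> p i) = f G p i"
proof -
  have iso: "strong_iso \<omega> \<tau>" and fixed: "iso_game \<omega> \<tau> G = G"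
    using assms(2) unfolding strong_automorphism_def by auto
  have "f G = iso_emb \<omega> \<tau> (f G)"
    using assms(1) iso fixed unfolding equivariant_def by metis
  then show ?thesis
    using iso_emb_apply[OF iso] by metis
qed

theorem proposition2:
  fixes f :: "('p::finite, 't::finite) game \<Rightarrow> ('p, 't, 'd::finite) embedding"
    and G :: "('p, 't) game" and p q :: 'p
  assumes "equivariant f"
    and "symmetric_players G p q"
  shows "\<exists>\<sigma> :: 't \<Rightarrow> 't. bij \<sigma> \<and> (\<forall>i. f G p i = f G q (\<sigma> i))"
proof -
  obtain \<omega> \<tau> where aut: "strong_automorphism G \<omega> \<tau>" and "\<omega> p = q"
    using assms(2) unfolding symmetric_players_def by blast
  then have "\<forall>i. f G p i = f G q (\<tau> p i)"
    using equivariant_embedding_automorphism_invariant[OF assms(1)] by metis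
  moreover have "bij (\<tau> p)"
    using aut unfolding strong_automorphism_def strong_iso_def by blast
  ultimately show ?thesis by blast
qed

end
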